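(* Let $C$ be a strictly convex subset of a topological real vector space $V$ and $f:C\to\mathbb{R}$ a continuous function (for the subspace topology on $C$). If $f$ is strictly quasi-convex, then $f$ is strictly sub-convex. In particular, if $f$ is continuous and strictly convex, then $f$ is strictly sub-convex.
   Context: Topological real vector spaces are not assumed Hausdorff. $f$ is strictly quasi-convex if $f((1-t)x+ty)<\max\{f(x),f(y)\}$ for all distinct $x,y\in C$, $t\in(0,1)$; strictly convex if $f((1-t)x+ty)<(1-t)f(x)+tf(y)$ for such $x,y,t$. $S_r(f)=\{x\in C: f(x)\le r\}$. For a subset $S$, $\mathrm{Aff}(S)$ is its affine hull; $\mathrm{ri}(S)$, $\mathrm{rc}(S)$ are the interior and closure of $S$ in the subspace topology of $\mathrm{Aff}(S)$. $]x,y[=\{(1-t)x+ty: t\in[0,1]\}\setminus\{x,y\}$. A set is strictly convex if for any two distinct $x,y$ in its relative closure, $]x,y[$ lies in its relative interior. $f$ is strictly sub-convex if $S_r(f)$ is strictly convex for every $r\in\mathbb{R}$. *)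

theory Defs
  imports "HOL-Analysis.Analysis"
begin

text \<open>Topological real vector spaces (not assumed Hausdorff): a real vector space with a
topology for which addition and scalar multiplication are jointly continuous
(product topologies on the domains).\<close>
class topological_real_vector = real_vector + topological_monoid_add +
  assumes tendsto_scaleR_Pair_tvs:
    "LIM p (nhds c \<times>\<^sub>F nhds a). fst p *\<^sub>R snd p :> nhds (c *\<^sub>R a)"

definition rel_closure :: "'a::topological_real_vector set \<Rightarrow> 'a set" where
  "rel_closure S = (top_of_set (affine hull S)) closure_of S"

definition strictly_convex_set :: "'a::topological_real_vector set \<Rightarrow> bool" where
  "strictly_convex_set S \<longleftrightarrow>
     (\<forall>x\<in>rel_closure S. \<forall>y\<in>rel_closure S. x \<noteq> y \<longrightarrow> open_segment x y \<subseteq> rel_interior S)"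

definition strictly_quasi_convex_on :: "'a::real_vector set \<Rightarrow> ('a \<Rightarrow> real) \<Rightarrow> bool" where
  "strictly_quasi_convex_on C f \<longleftrightarrow>
     (\<forall>x\<in>C. \<forall>y\<in>C. \<forall>t::real. x \<noteq> y \<and> 0 < t \<and> t < 1 \<longrightarrow>
        f ((1 - t) *\<^sub>R x + t *\<^sub>R y) < max (f x) (f y))"

definition strictly_convex_on :: "'a::real_vector set \<Rightarrow> ('a \<Rightarrow> real) \<Rightarrow> bool" where
  "strictly_convex_on C f \<longleftrightarrow>
     (\<forall>x\<in>C. \<forall>y\<in>C. \<forall>t::real. x \<noteq> y \<and> 0 < t \<and> t < 1 \<longrightarrow>
        f ((1 - t) *\<^sub>R x + t *\<^sub>R y) < (1 - t) * f x + t * f y)"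

definition sublevel :: "'a set \<Rightarrow> ('a \<Rightarrow> real) \<Rightarrow> real \<Rightarrow> 'a set" where
  "sublevel C f r = {x \<in> C. f x \<le> r}"

definition strictly_sub_convex_on :: "'a::topological_real_vector set \<Rightarrow> ('a \<Rightarrow> real) \<Rightarrow> bool" where
  "strictly_sub_convex_on C f \<longleftrightarrow> (\<forall>r::real. strictly_convex_set (sublevel C f r))"

end

theory Submission
  imports Defs
begin

text \<open>The sublevel set \<open>S = {x \<in> C. f x \<le> r}\<close> is convex by quasi-convexity and relatively
closed in \<open>C\<close> by continuity. A point \<open>z\<close> strictly between two points \<open>x \<noteq> y\<close> of its relative
closure is strictly between two distinct points \<open>a, b\<close> of the open segment \<open>]x,y[\<close>; these lie in
the closure of \<open>S\<close> (closures of convex sets are convex) and in \<open>C\<close> (strict convexity of \<open>C\<close>),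
hence in \<open>S\<close>. Strict quasi-convexity then gives \<open>f z < r\<close>, and since \<open>z\<close> is in the relative
interior of \<open>C\<close>, continuity puts a relative neighbourhood of \<open>z\<close> inside \<open>S\<close>.\<close>

lemma tendsto_scaleR_tvs:
  fixes g :: "'b \<Rightarrow> 'a::topological_real_vector"
  assumes "(f \<longlongrightarrow> c) F" and "(g \<longlongrightarrow> a) F"
  shows "((\<lambda>x. f x *\<^sub>R g x) \<longlongrightarrow> c *\<^sub>R a) F"
proof -
  have "((\<lambda>x. (f x, g x)) \<longlongrightarrow> (c, a)) F"
    using assms by (rule tendsto_Pair)
  then have "filterlim (\<lambda>x. (f x, g x)) (nhds c \<times>\<^sub>F nhds a) F"
    by (simp add: nhds_prod)
  from filterlim_compose[OF tendsto_scaleR_Pair_tvs this] show ?thesis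
    by simp
qed

lemma convex_closure_tvs:
  fixes S :: "'a::topological_real_vector set"
  assumes "convex S"
  shows "convex (closure S)"
  unfolding convex_alt
proof (intro ballI allI impI)
  fix x y and u :: real
  assume x: "x \<in> closure S" and y: "y \<in> closure S" and u: "0 \<le> u \<and> u \<le> 1"
  define g where "g p = (1 - u) *\<^sub>R fst p + u *\<^sub>R snd p" for p :: "'a \<times> 'a"
  have "continuous_on UNIV g"
    unfolding g_def continuous_on_def
    by (intro ballI tendsto_add tendsto_scaleR_tvs tendsto_const tendsto_fst tendsto_snd
        tendsto_ident_at)
  then have "g ` closure (S \<times> S) \<subseteq> closure (g ` (S \<times> S))"
    by (rule continuous_image_closure_subset) simp
  also have "\<dots> \<subseteq> closure S"
    using assms u by (intro closure_mono) (auto simp: g_def convex_alt)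
  finally have "g (x, y) \<in> closure S"
    using x y by (auto simp: closure_Times)
  then show "(1 - u) *\<^sub>R x + u *\<^sub>R y \<in> closure S"
    by (simp add: g_def)
qed

lemma rel_closure_eq: "rel_closure S = affine hull S \<inter> closure S"
  unfolding rel_closure_def closure_of_subtopology euclidean_closure_of
  by (simp add: Int_absorb1 hull_subset)

lemma rel_closure_mono: "S \<subseteq> T \<Longrightarrow> rel_closure S \<subseteq> rel_closure T"
  unfolding rel_closure_eq using hull_mono closure_mono by blast

lemma strictly_convex_set_imp_convex:
  assumes "strictly_convex_set C"
  shows "convex C"
  unfolding convex_contains_open_segment
proof (intro ballI)
  fix x y assume "x \<in> C" "y \<in> C"
  then have "x \<in> rel_closure C" "y \<in> rel_closure C"
    by (auto simp: rel_closure_eq hull_inc closure_subset[THEN subsetD])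
  with assms have "x \<noteq> y \<Longrightarrow> open_segment x y \<subseteq> rel_interior C"
    unfolding strictly_convex_set_def by blast
  then show "open_segment x y \<subseteq> C"
    using rel_interior_subset by fastforce
qed

lemma strictly_quasi_convex_onD:
  assumes "strictly_quasi_convex_on C f" "x \<in> C" "y \<in> C" "z \<in> open_segment x y"
  shows "f z < max (f x) (f y)"
  using assms unfolding strictly_quasi_convex_on_def in_segment(2) by blast

lemma strictly_convex_imp_strictly_quasi_convex_on:
  assumes "strictly_convex_on C f"
  shows "strictly_quasi_convex_on C f"
  unfolding strictly_quasi_convex_on_def
proof (intro ballI allI impI)
  fix x y and t :: real
  assume "x \<in> C" "y \<in> C" and t: "x \<noteq> y \<and> 0 < t \<and> t < 1"
  then have "f ((1 - t) *\<^sub>R x + t *\<^sub>R y) < (1 - t) * f x + t * f y"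
    using assms unfolding strictly_convex_on_def by blast
  also have "\<dots> \<le> (1 - t) * max (f x) (f y) + t * max (f x) (f y)"
    using t by (intro add_mono mult_left_mono) auto
  finally show "f ((1 - t) *\<^sub>R x + t *\<^sub>R y) < max (f x) (f y)"
    by (simp add: algebra_simps)
qed

lemma open_segment_between:
  fixes x y z :: "'a::real_vector"
  assumes "z \<in> open_segment x y"
  obtains a b where "a \<in> open_segment x y" "b \<in> open_segment x y" "z \<in> open_segment a b"
proof -
  obtain u where u: "0 < u" "u < 1" "z = (1 - u) *\<^sub>R x + u *\<^sub>R y" and xy: "x \<noteq> y"
    using assms in_segment(2) by blast
  define a where "a = (1 - u / 2) *\<^sub>R x + (u / 2) *\<^sub>R y"
  define b where "b = (1 - (1 + u) / 2) *\<^sub>R x + ((1 + u) / 2) *\<^sub>R y"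
  have "(1 - u) *\<^sub>R a + u *\<^sub>R b =
      ((1 - u) * (1 - u / 2) + u * (1 - (1 + u) / 2)) *\<^sub>R x
      + ((1 - u) * (u / 2) + u * ((1 + u) / 2)) *\<^sub>R y"
    by (simp add: a_def b_def algebra_simps)
  also have "\<dots> = z"
  proof -
    have "(1 - u) * (1 - u / 2) + u * (1 - (1 + u) / 2) = 1 - u"
      "(1 - u) * (u / 2) + u * ((1 + u) / 2) = u"
      by (simp_all add: field_simps)
    then show ?thesis
      by (simp only: u(3))
  qed
  finally have z_eq: "z = (1 - u) *\<^sub>R a + u *\<^sub>R b" ..
  have "b - a = ((1 - (1 + u) / 2) - (1 - u / 2)) *\<^sub>R x + ((1 + u) / 2 - u / 2) *\<^sub>R y"
    by (simp add: a_def b_def algebra_simps)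
  also have "\<dots> = (1 / 2) *\<^sub>R (y - x)"
    by (simp add: field_simps scaleR_diff_right)
  finally have "a \<noteq> b"
    using xy by auto
  moreover have "a \<in> open_segment x y"
    unfolding a_def in_segment(2) using xy u by (auto intro!: exI[of _ "u / 2"])
  moreover have "b \<in> open_segment x y"
    unfolding b_def in_segment(2) using xy u by (auto intro!: exI[of _ "(1 + u) / 2"])
  ultimately show ?thesis
    using u z_eq that unfolding in_segment(2) by blast
qed

lemma convex_sublevel:
  assumes "convex C" "strictly_quasi_convex_on C f"
  shows "convex (sublevel C f r)"
  unfolding convex_contains_open_segment
proof (intro ballI subsetI)
  fix x y z assume x: "x \<in> sublevel C f r" and y: "y \<in> sublevel C f r"
    and z: "z \<in> open_segment x y"
  then have "z \<in> C"
    using assms(1) closed_segment_subset open_closed_segment by (fastforce simp: sublevel_def)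
  moreover have "f z < max (f x) (f y)"
    using x y z strictly_quasi_convex_onD[OF assms(2)] by (auto simp: sublevel_def)
  ultimately show "z \<in> sublevel C f r"
    using x y by (auto simp: sublevel_def)
qed

lemma closure_sublevel_subset:
  assumes "continuous_on C f"
  shows "C \<inter> closure (sublevel C f r) \<subseteq> sublevel C f r"
proof
  fix z assume z: "z \<in> C \<inter> closure (sublevel C f r)"
  show "z \<in> sublevel C f r"
  proof (rule ccontr)
    assume "z \<notin> sublevel C f r"
    then have "f z > r"
      using z by (auto simp: sublevel_def)
    obtain A where "open A" and A: "A \<inter> C = f -` {r<..} \<inter> C"
      using assms open_greaterThan unfolding continuous_on_open_invariant by blast
    then have "z \<in> A \<inter> closure (sublevel C f r)"
      using z \<open>f z > r\<close> by auto
    then obtain w where "w \<in> A" "w \<in> C" "f w \<le> r"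
      using open_Int_closure_eq_empty[OF \<open>open A\<close>] by (auto simp: sublevel_def)
    moreover have "w \<in> A \<Longrightarrow> w \<in> C \<Longrightarrow> f w > r"
      using A by blast
    ultimately show False
      by simp
  qed
qed

lemma rel_interior_sublevel:
  assumes "continuous_on C f" "z \<in> rel_interior C" "f z < r"
  shows "z \<in> rel_interior (sublevel C f r)"
proof -
  obtain T where T: "open T" "z \<in> T" "T \<inter> affine hull C \<subseteq> C"
    using assms(2) mem_rel_interior by blast
  obtain A where "open A" and A: "A \<inter> C = f -` {..<r} \<inter> C"
    using assms(1) open_lessThan unfolding continuous_on_open_invariant by blast
  have "z \<in> C"
    using assms(2) rel_interior_subset by blast
  have hull: "affine hull sublevel C f r \<subseteq> affine hull C"
    by (rule hull_mono) (auto simp: sublevel_def)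
  have "w \<in> sublevel C f r" if "w \<in> T \<inter> A" "w \<in> affine hull sublevel C f r" for w
  proof -
    have "w \<in> C"
      using that T(3) hull by blast
    moreover from this have "f w < r"
      using that A by blast
    ultimately show ?thesis
      by (simp add: sublevel_def)
  qed
  moreover have "z \<in> sublevel C f r" "z \<in> A"
    using A \<open>z \<in> C\<close> assms(3) by (auto simp: sublevel_def)
  ultimately show ?thesis
    unfolding mem_rel_interior using T \<open>open A\<close> by (intro exI[of _ "T \<inter> A"]) blast
qed

lemma strictly_sub_convex_if_strictly_quasi_convex:
  fixes C :: "'a::topological_real_vector set"
  assumes C: "strictly_convex_set C" and f: "continuous_on C f" "strictly_quasi_convex_on C f"
  shows "strictly_sub_convex_on C f"
  unfolding strictly_sub_convex_on_def strictly_convex_set_def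
proof (intro allI ballI impI subsetI)
  fix r x y z
  let ?S = "sublevel C f r"
  assume x: "x \<in> rel_closure ?S" and y: "y \<in> rel_closure ?S" and "x \<noteq> y"
    and z: "z \<in> open_segment x y"
  have "rel_closure ?S \<subseteq> rel_closure C"
    by (rule rel_closure_mono) (auto simp: sublevel_def)
  with x y \<open>x \<noteq> y\<close> C have seg: "open_segment x y \<subseteq> rel_interior C"
    unfolding strictly_convex_set_def by blast
  have cl: "convex (closure ?S)"
    using C f by (intro convex_closure_tvs convex_sublevel strictly_convex_set_imp_convex)
  have "open_segment x y \<subseteq> ?S"
  proof
    fix w assume w: "w \<in> open_segment x y"
    have "w \<in> closure ?S"
      using x y w cl closed_segment_subset open_closed_segment by (fastforce simp: rel_closure_eq)
    moreover have "w \<in> C"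
      using w seg rel_interior_subset by blast
    ultimately show "w \<in> ?S"
      using closure_sublevel_subset[OF f(1)] by blast
  qed
  moreover obtain a b where "a \<in> open_segment x y" "b \<in> open_segment x y" "z \<in> open_segment a b"
    using z open_segment_between by blast
  ultimately have "a \<in> ?S" "b \<in> ?S"
    by blast+
  with \<open>z \<in> open_segment a b\<close> have "f z < max (f a) (f b)" "max (f a) (f b) \<le> r"
    using strictly_quasi_convex_onD[OF f(2)] by (auto simp: sublevel_def)
  then have "f z < r"
    by linarith
  then show "z \<in> rel_interior ?S"
    using rel_interior_sublevel f(1) seg z by blast
qed

theorem mainTheorem6:
  fixes C :: "'a::topological_real_vector set" and f :: "'a \<Rightarrow> real"
  assumes "strictly_convex_set C"
    and "continuous_on C f"
  shows "(strictly_quasi_convex_on C f \<longrightarrow> strictly_sub_convex_on C f)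
    \<and> (strictly_convex_on C f \<longrightarrow> strictly_sub_convex_on C f)"
  using assms strictly_sub_convex_if_strictly_quasi_convex
    strictly_convex_imp_strictly_quasi_convex_on by blast

end
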